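(* Let $A$ be an infinite set, fix $z\in A$, $A'=A\setminus\{z\}$, and $p\in[1,\infty)$. Let $\alpha^n=a_1^na_2^n\ldots\in N(A)$ for $n\in\mathbb{N}^*$, $x_n=p_p(\alpha^n)$, and let $\alpha=a_1a_2\ldots\in N(A)$, $x=p_p(\alpha)$. Suppose the sequence $(a_n)_{n\in\mathbb{N}^*}$ is not eventually constant (i.e. for every $q\in\mathbb{N}^*$ it is not constant from index $q$ on) and $\lim_{n\to\infty}\|x_n-x\|_p=0$. Then $\lim_{n\to\infty}\alpha^n=\alpha$ in $N(A)$.
   Context: $l^p(A)$ is the set of families $x=(x_a)_{a\in A'}$ of real numbers with $x_a=0$ for all but countably many $a$ and $\sum_a|x_a|^p<\infty$, with norm $\|x\|_p=(\sum_a|x_a|^p)^{1/p}$. $N(A)$ is the set of all sequences $\alpha=a_1a_2a_3\ldots$ with $a_k\in A$, with metric $d(v,v')=1/k$ where $k$ is the first index at which $v,v'$ differ, and $d(v,v)=0$. The map $p_p:N(A)\to l^p(A)$ is $p_p(\alpha)=(\alpha_b)_{b\in A'}$ where, for $\alpha=a_1a_2\ldots$, $\alpha_b=\sum_{k:\,a_k=b}2^{-k}$ (and $\alpha_b=0$ if no $a_k$ equals $b$). *)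

theory Defs
  imports "HOL-Analysis.Analysis"
begin

text \<open>Elements of N(A) are sequences a_1 a_2 ... with values in A. We index them
  from 0: a sequence v :: nat => 'a represents v 0 v 1 v 2 ..., i.e. paper index k
  corresponds to Isabelle index k-1.\<close>

definition NA :: "'a set \<Rightarrow> (nat \<Rightarrow> 'a) set" where
  "NA A = {v. \<forall>k. v k \<in> A}"

definition dN :: "(nat \<Rightarrow> 'a) \<Rightarrow> (nat \<Rightarrow> 'a) \<Rightarrow> real" where
  "dN v v' = (if v = v' then 0 else 1 / real (Suc (LEAST k. v k \<noteq> v' k)))"

definition coordN :: "(nat \<Rightarrow> 'a) \<Rightarrow> 'a \<Rightarrow> real" where
  "coordN v b = (\<Sum>k. if v k = b then (1/2) ^ Suc k else 0)"

definition pmap :: "'a set \<Rightarrow> 'a \<Rightarrow> (nat \<Rightarrow> 'a) \<Rightarrow> ('a \<Rightarrow> real)" where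
  "pmap A z v = (\<lambda>b. if b \<in> A - {z} then coordN v b else 0)"

definition lp_norm :: "real \<Rightarrow> 'a set \<Rightarrow> ('a \<Rightarrow> real) \<Rightarrow> real" where
  "lp_norm p I x = (infsum (\<lambda>b. \<bar>x b\<bar> powr p) I) powr (1 / p)"

end

theory Submission
  imports Defs
begin

text \<open>Convergence in \<open>\<ell>\<^sup>p\<close> forces uniform convergence of the coordinates \<open>\<alpha>\<^sub>b\<close>, \<open>b \<noteq> z\<close>.
  If the first letters of \<open>\<alpha>\<^sup>n\<close> and \<open>\<alpha>\<close> differed infinitely often, then either the letter
  \<open>c = a\<^sub>1\<^sup>n \<noteq> z\<close> would carry weight at least \<open>1/2\<close> in \<open>x\<^sub>n\<close> but, since \<open>\<alpha>\<close> is not eventually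
  constant, noticeably less in \<open>x\<close>; or \<open>a\<^sub>1\<^sup>n = z\<close>, and then the letters \<open>a\<^sub>1\<close> and some
  \<open>a\<^sub>k \<noteq> z\<close> would carry total weight above \<open>1/2\<close> in \<open>x\<close> but at most \<open>1/2\<close> in \<open>x\<^sub>n\<close>.
  Since \<open>\<alpha>\<^sub>b\<close> is the weight of the first letter plus half the coordinate of the shifted
  word, the argument propagates to every prefix length, which is convergence in \<open>N(A)\<close>.\<close>

abbreviation weight :: "nat \<Rightarrow> real" where
  "weight i \<equiv> (1/2) ^ Suc i"

lemma summable_weight_indicator: "summable (\<lambda>i. if P i then weight i else 0)"
  by (rule summable_comparison_test[OF _ summable_geometric[of "1/2"]]) auto

lemma sum_coordN_eq_suminf:
  assumes "finite F"
  shows "(\<Sum>b\<in>F. coordN v b) = (\<Sum>i. if v i \<in> F then weight i else 0)"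
proof -
  have "(\<Sum>b\<in>F. coordN v b) = (\<Sum>i. \<Sum>b\<in>F. if v i = b then weight i else 0)"
    unfolding coordN_def by (rule suminf_sum[symmetric]) (rule summable_weight_indicator)
  also have "\<dots> = (\<Sum>i. if v i \<in> F then weight i else 0)"
    using assms by (intro suminf_cong) (simp add: sum.delta)
  finally show ?thesis .
qed

lemma sum_coordN_upper:
  assumes "finite F" "finite I" "\<And>i. i \<in> I \<Longrightarrow> v i \<notin> F"
  shows "(\<Sum>b\<in>F. coordN v b) \<le> 1 - sum weight I"
proof -
  have s: "(\<lambda>i. weight i - (if i \<in> I then weight i else 0)) sums (1 - sum weight I)"
    by (intro sums_diff power_half_series sums_If_finite_set assms)
  have "(\<Sum>i. if v i \<in> F then weight i else 0) \<le> (\<Sum>i. weight i - (if i \<in> I then weight i else 0))"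
    by (intro suminf_le summable_weight_indicator) (use s assms(3) in \<open>auto simp: sums_iff\<close>)
  then show ?thesis
    unfolding sum_coordN_eq_suminf[OF assms(1)] sums_unique[OF s, symmetric] .
qed

lemma sum_coordN_lower:
  assumes "finite F" "finite I" "\<And>i. i \<in> I \<Longrightarrow> v i \<in> F"
  shows "sum weight I \<le> (\<Sum>b\<in>F. coordN v b)"
proof -
  have "sum weight I = (\<Sum>i\<in>I. if v i \<in> F then weight i else 0)"
    using assms(3) by simp
  also have "\<dots> \<le> (\<Sum>i. if v i \<in> F then weight i else 0)"
    by (intro sum_le_suminf summable_weight_indicator assms) auto
  finally show ?thesis
    using sum_coordN_eq_suminf[OF assms(1)] by simp
qed

lemma coordN_nonneg: "0 \<le> coordN v b"
  unfolding coordN_def by (intro suminf_nonneg summable_weight_indicator) auto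

lemma coordN_le_1: "coordN v b \<le> 1"
  using sum_coordN_upper[of "{b}" "{}" v] by simp

lemma coordN_summable_on: "coordN v summable_on B"
proof (rule nonneg_bdd_above_summable_on)
  show "bdd_above (sum (coordN v) ` {F. F \<subseteq> B \<and> finite F})"
    using sum_coordN_upper[of _ "{}" v] by (intro bdd_aboveI[of _ 1]) auto
qed (rule coordN_nonneg)

definition shift :: "nat \<Rightarrow> (nat \<Rightarrow> 'a) \<Rightarrow> nat \<Rightarrow> 'a" where
  "shift m v = (\<lambda>i. v (i + m))"

lemma coordN_shift:
  "coordN v b = (\<Sum>i<m. if v i = b then weight i else 0) + (1/2) ^ m * coordN (shift m v) b"
proof -
  have "coordN v b = (\<Sum>i. if v (i + m) = b then weight (i + m) else 0)
                     + (\<Sum>i<m. if v i = b then weight i else 0)"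
    unfolding coordN_def by (rule suminf_split_initial_segment[OF summable_weight_indicator])
  also have "(\<Sum>i. if v (i + m) = b then weight (i + m) else 0)
           = (\<Sum>i. (1/2) ^ m * (if v (i + m) = b then weight i else 0))"
    by (intro suminf_cong) (simp add: power_add)
  also have "\<dots> = (1/2) ^ m * coordN (shift m v) b"
    unfolding coordN_def shift_def by (rule suminf_mult[OF summable_weight_indicator])
  finally show ?thesis by simp
qed

lemma coordN_diff_shift:
  assumes "\<And>i. i < m \<Longrightarrow> u i = v i"
  shows "coordN u b - coordN v b = (1/2) ^ m * (coordN (shift m u) b - coordN (shift m v) b)"
proof -
  have "(\<Sum>i<m. if u i = b then weight i else 0) = (\<Sum>i<m. if v i = b then weight i else 0)"
    using assms by (intro sum.cong) auto
  then show ?thesis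
    using coordN_shift[of u b m] coordN_shift[of v b m] by (simp add: algebra_simps)
qed

lemma coordN_gap_first_letter:
  assumes "u 0 \<noteq> v 0" "v k \<noteq> v 1" "k \<ge> 1"
  shows "coordN v (u 0) + weight k \<le> coordN u (u 0)"
proof -
  have "1/2 \<le> coordN u (u 0)"
    using sum_coordN_lower[of "{u 0}" "{0}" u] by simp
  moreover have "coordN v (u 0) \<le> 1/2 - weight k"
  proof (cases "v 1 = u 0")
    case True
    then have "\<And>i. i \<in> {0, k} \<Longrightarrow> v i \<notin> {u 0}"
      using assms(1,2) by auto
    then have "coordN v (u 0) \<le> 1 - sum weight {0, k}"
      using sum_coordN_upper[of "{u 0}" "{0, k}" v] by simp
    then show ?thesis
      using assms(3) by simp
  next
    case False
    then have "\<And>i. i \<in> {0, 1} \<Longrightarrow> v i \<notin> {u 0}"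
      using assms(1) by auto
    then have "coordN v (u 0) \<le> 1 - sum weight {0, 1}"
      using sum_coordN_upper[of "{u 0}" "{0, 1}" v] by simp
    moreover have "weight k \<le> weight 1"
      using assms(3) by (intro power_decreasing) auto
    ultimately show ?thesis by simp
  qed
  ultimately show ?thesis by linarith
qed

lemma sum_coordN_gap_pair:
  assumes "u 0 \<notin> {v 0, v k}" "k \<ge> 1"
  shows "(\<Sum>b\<in>{v 0, v k}. coordN u b) + weight k \<le> (\<Sum>b\<in>{v 0, v k}. coordN v b)"
proof -
  have "(\<Sum>b\<in>{v 0, v k}. coordN u b) \<le> 1 - sum weight {0}"
    using sum_coordN_upper[of "{v 0, v k}" "{0}" u] assms(1) by auto
  moreover have "sum weight {0, k} \<le> (\<Sum>b\<in>{v 0, v k}. coordN v b)"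
    using sum_coordN_lower[of "{v 0, v k}" "{0, k}" v] by auto
  moreover have "sum weight {0, k} = 1/2 + weight k"
    using assms(2) by simp
  ultimately show ?thesis by simp
qed

lemma first_letter_eq:
  assumes "u 0 \<in> A" "\<And>i. v i \<in> A" "v k \<noteq> v 1" "k \<ge> 1"
    and close: "\<And>b. b \<in> A - {z} \<Longrightarrow> \<bar>coordN u b - coordN v b\<bar> < weight k / 2"
  shows "u 0 = v 0"
proof (rule ccontr)
  assume ne: "u 0 \<noteq> v 0"
  show False
  proof (cases "u 0 = z")
    case False
    with assms(1) have "\<bar>coordN u (u 0) - coordN v (u 0)\<bar> < weight k / 2"
      by (intro close) simp
    moreover have "0 < weight k"
      by simp
    ultimately show False
      using coordN_gap_first_letter[of u v k, OF ne assms(3,4)] by linarith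
  next
    case True
    obtain j where j: "j \<in> {1, k}" "v j \<noteq> z"
      using assms(3) by auto
    have "weight k \<le> weight j"
      using j assms(4) by (intro power_decreasing) auto
    define F where "F = {v 0, v j}"
    have F: "F \<subseteq> A - {z}"
      using assms(2) ne j True unfolding F_def by auto
    have "(\<Sum>b\<in>F. coordN v b) - (\<Sum>b\<in>F. coordN u b) = (\<Sum>b\<in>F. coordN v b - coordN u b)"
      by (simp add: sum_subtractf)
    also have "\<dots> \<le> (\<Sum>b\<in>F. \<bar>coordN u b - coordN v b\<bar>)"
      by (intro sum_mono) linarith
    also have "\<dots> < (\<Sum>b\<in>F. weight j / 2)"
    proof (rule sum_strict_mono)
      show "\<bar>coordN u b - coordN v b\<bar> < weight j / 2" if "b \<in> F" for b
      proof -
        have "\<bar>coordN u b - coordN v b\<bar> < weight k / 2"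
          using that F by (intro close) blast
        then show ?thesis
          using \<open>weight k \<le> weight j\<close> by linarith
      qed
    qed (simp_all add: F_def)
    also have "\<dots> \<le> weight j"
      unfolding F_def by (cases "v 0 = v j") auto
    finally have "(\<Sum>b\<in>F. coordN v b) < (\<Sum>b\<in>F. coordN u b) + weight j"
      by simp
    moreover have "u 0 \<notin> {v 0, v j}" "j \<ge> 1"
      using j ne True assms(4) by auto
    ultimately show False
      using sum_coordN_gap_pair[of u v j] unfolding F_def by linarith
  qed
qed

lemma abs_le_lp_norm:
  assumes "p > 0" "b \<in> I" "(\<lambda>b. \<bar>x b\<bar> powr p) summable_on I"
  shows "\<bar>x b\<bar> \<le> lp_norm p I x"
proof -
  have "\<bar>x b\<bar> powr p = infsum (\<lambda>b. \<bar>x b\<bar> powr p) {b}"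
    by simp
  also have "\<dots> \<le> infsum (\<lambda>b. \<bar>x b\<bar> powr p) I"
    by (rule infsum_mono_neutral[OF summable_on_finite assms(3)]) (use assms(2) in auto)
  finally have "(\<bar>x b\<bar> powr p) powr (1/p) \<le> lp_norm p I x"
    unfolding lp_norm_def using assms(1) by (intro powr_mono2) auto
  moreover have "(\<bar>x b\<bar> powr p) powr (1/p) = \<bar>x b\<bar>"
    using assms(1) by (cases "x b = 0") (auto simp: powr_powr)
  ultimately show ?thesis by simp
qed

lemma pmap_diff_powr_summable_on:
  assumes "p \<ge> 1"
  shows "(\<lambda>b. \<bar>pmap A z u b - pmap A z v b\<bar> powr p) summable_on I"
proof (rule summable_on_comparison_test)
  show "(\<lambda>b. coordN u b + coordN v b) summable_on I"
    by (intro summable_on_add coordN_summable_on)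
  fix b
  let ?d = "\<bar>pmap A z u b - pmap A z v b\<bar>"
  have "?d \<le> 1" "?d \<le> coordN u b + coordN v b"
    unfolding pmap_def
    using coordN_nonneg[of u b] coordN_nonneg[of v b] coordN_le_1[of u b] coordN_le_1[of v b]
    by auto
  moreover have "?d powr p \<le> ?d"
    using \<open>?d \<le> 1\<close> assms by (cases "?d = 0") (auto intro: powr_le_one_le)
  ultimately show "?d powr p \<le> coordN u b + coordN v b"
    by simp
qed simp

lemma coordN_diff_le_lp_norm:
  assumes "p \<ge> 1" "b \<in> A - {z}"
  shows "\<bar>coordN u b - coordN v b\<bar> \<le> lp_norm p (A - {z}) (\<lambda>b. pmap A z u b - pmap A z v b)"
proof -
  have "pmap A z u b - pmap A z v b = coordN u b - coordN v b"
    using assms(2) by (simp add: pmap_def)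
  moreover have "\<bar>pmap A z u b - pmap A z v b\<bar>
      \<le> lp_norm p (A - {z}) (\<lambda>b. pmap A z u b - pmap A z v b)"
    using assms(1)
    by (intro abs_le_lp_norm[OF _ assms(2) pmap_diff_powr_summable_on[OF assms(1)]]) simp
  ultimately show ?thesis
    by simp
qed

lemma eventually_prefix_eq:
  fixes \<beta>s :: "nat \<Rightarrow> nat \<Rightarrow> 'a"
  assumes "\<And>n k. \<beta>s n k \<in> A" "\<And>k. \<beta> k \<in> A"
    and not_eventually_const: "\<forall>q. \<not> (\<forall>k\<ge>q. \<beta> k = \<beta> q)"
    and close: "\<And>\<epsilon>. \<epsilon> > 0 \<Longrightarrow>
      eventually (\<lambda>n. \<forall>b\<in>A - {z}. \<bar>coordN (\<beta>s n) b - coordN \<beta> b\<bar> < \<epsilon>) sequentially"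
  shows "eventually (\<lambda>n. \<forall>i<m. \<beta>s n i = \<beta> i) sequentially"
proof (induction m)
  case 0
  then show ?case by simp
next
  case (Suc m)
  obtain k where k: "k \<ge> Suc m" "\<beta> k \<noteq> \<beta> (Suc m)"
    using not_eventually_const by blast
  define \<delta> where "\<delta> = weight (k - m) / 2"
  have "eventually (\<lambda>n. (\<forall>i<m. \<beta>s n i = \<beta> i) \<and>
      (\<forall>b\<in>A - {z}. \<bar>coordN (\<beta>s n) b - coordN \<beta> b\<bar> < (1/2) ^ m * \<delta>)) sequentially"
    using Suc close[of "(1/2) ^ m * \<delta>"] by (intro eventually_conj) (simp_all add: \<delta>_def)
  then show ?case
  proof eventually_elim
    case (elim n)
    have "shift m (\<beta>s n) 0 = shift m \<beta> 0"
    proof (rule first_letter_eq[where A = A and z = z and k = "k - m"])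
      show "shift m (\<beta>s n) 0 \<in> A" "shift m \<beta> i \<in> A" for i
        using assms(1,2) by (simp_all add: shift_def)
      show "shift m \<beta> (k - m) \<noteq> shift m \<beta> 1" "k - m \<ge> 1"
        using k by (simp_all add: shift_def)
      fix b assume "b \<in> A - {z}"
      with elim have "\<bar>coordN (\<beta>s n) b - coordN \<beta> b\<bar> < (1/2) ^ m * \<delta>"
        by blast
      moreover have "coordN (\<beta>s n) b - coordN \<beta> b
          = (1/2) ^ m * (coordN (shift m (\<beta>s n)) b - coordN (shift m \<beta>) b)"
        using elim by (intro coordN_diff_shift) blast
      ultimately show "\<bar>coordN (shift m (\<beta>s n)) b - coordN (shift m \<beta>) b\<bar> < weight (k - m) / 2"
        unfolding \<delta>_def by (simp add: abs_mult)
    qed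
    with elim show ?case
      by (auto simp: shift_def less_Suc_eq)
  qed
qed

lemma dN_nonneg: "0 \<le> dN u v"
  by (simp add: dN_def)

lemma dN_le_if_prefix_eq:
  assumes "\<And>i. i < m \<Longrightarrow> u i = v i"
  shows "dN u v \<le> 1 / real (Suc m)"
proof (cases "u = v")
  case False
  define L where "L = (LEAST k. u k \<noteq> v k)"
  from False obtain k where "u k \<noteq> v k"
    by blast
  then have "u L \<noteq> v L"
    unfolding L_def by (rule LeastI)
  then have "m \<le> L"
    using assms not_le by blast
  then show ?thesis
    using False by (simp add: dN_def L_def[symmetric] frac_le)
qed (simp add: dN_def)

lemma dN_tendsto_0_if_prefix_eq:
  assumes "\<And>m. eventually (\<lambda>n. \<forall>i<m. us n i = v i) sequentially"
  shows "(\<lambda>n. dN (us n) v) \<longlonglongrightarrow> 0"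
proof (rule tendstoI)
  fix \<epsilon> :: real assume "\<epsilon> > 0"
  then obtain m where m: "inverse (real (Suc m)) < \<epsilon>"
    using reals_Archimedean by blast
  show "eventually (\<lambda>n. dist (dN (us n) v) 0 < \<epsilon>) sequentially"
    using assms[of m]
  proof eventually_elim
    case (elim n)
    then show ?case
      using dN_le_if_prefix_eq[of m "us n" v] dN_nonneg[of "us n" v] m
      by (simp add: inverse_eq_divide)
  qed
qed

theorem proposition3p3:
  fixes A :: "'a set" and z :: 'a and p :: real
    and \<alpha>s :: "nat \<Rightarrow> (nat \<Rightarrow> 'a)" and \<alpha> :: "nat \<Rightarrow> 'a"
  assumes "infinite A" and "z \<in> A" and "p \<ge> 1"
    and "\<And>n. \<alpha>s n \<in> NA A" and "\<alpha> \<in> NA A"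
    and "\<forall>q. \<not> (\<forall>k\<ge>q. \<alpha> k = \<alpha> q)"
    and "(\<lambda>n. lp_norm p (A - {z}) (\<lambda>b. pmap A z (\<alpha>s n) b - pmap A z \<alpha> b)) \<longlonglongrightarrow> 0"
  shows "(\<lambda>n. dN (\<alpha>s n) \<alpha>) \<longlonglongrightarrow> 0"
proof (rule dN_tendsto_0_if_prefix_eq, rule eventually_prefix_eq[where A = A and z = z])
  show "\<alpha>s n k \<in> A" "\<alpha> k \<in> A" for n k
    using assms(4,5) by (auto simp: NA_def)
  show "\<forall>q. \<not> (\<forall>k\<ge>q. \<alpha> k = \<alpha> q)"
    by (fact assms(6))
  fix \<epsilon> :: real assume "\<epsilon> > 0"
  with assms(7) have "eventually (\<lambda>n.
      dist (lp_norm p (A - {z}) (\<lambda>b. pmap A z (\<alpha>s n) b - pmap A z \<alpha> b)) 0 < \<epsilon>) sequentially"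
    by (rule tendstoD)
  then show "eventually (\<lambda>n. \<forall>b\<in>A - {z}. \<bar>coordN (\<alpha>s n) b - coordN \<alpha> b\<bar> < \<epsilon>) sequentially"
  proof eventually_elim
    case (elim n)
    show ?case
      using coordN_diff_le_lp_norm[OF assms(3), of _ A z "\<alpha>s n" \<alpha>] elim by fastforce
  qed
qed

end
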